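(* Consider a common-value auction for a single item among at least two "slow" bidders and one "fast" bidder, all risk neutral. The value of the item evolves as $v_t = e^{m_t} v_0$ for $t \ge 0$, where $v_0>0$ and $m_t \sim N(-\tfrac{\sigma^2}{2} t, \sigma^2 t)$ (a geometric Brownian motion with $\sigma>0$, so $\mathbb{E}[v_{t+\delta}\mid v_t] = v_t$ for all $t,\delta\ge 0$). The slow bidders submit sealed bids at time $0$. With probability $p \in [0,1]$ (independently of the value process), the fast bidder gets an opportunity at time $\Delta>0$, after observing the slow bidders' bids and $v_\Delta$, to submit a bid that outbids the highest slow bid; otherwise the fast bidder does not bid. The highest bidder wins, pays its own bid, and receives the realized value of the item (with expected value $v_0$ given time-$0$ information). Then in equilibrium the winning slow bidder's time-$0$ bid is the largest $b_0^S \in [0, v_0]$ solving $$(1-p)(v_0 - b_0^S) + p\, P(v_\Delta < b_0^S)\big(\mathbb{E}[v_\Delta \mid v_\Delta < b_0^S] - b_0^S\big) = 0,$$ and the slow bidder wins the item with probability $p\, P(v_\Delta < b_0^S) + (1-p)$.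
   Context: A bidder's payoff is the value of the item minus its bid if it wins, and $0$ otherwise. If given a revision opportunity, the fast bidder outbids the highest slow bid $b$ (paying $b$) exactly when $v_\Delta > b$. *)

theory Defs
  imports "HOL-Probability.Probability"
begin

definition logret_dist :: "real \<Rightarrow> real \<Rightarrow> real measure" where
  "logret_dist \<sigma> \<Delta> = density lborel (normal_density (- (\<sigma>\<^sup>2 * \<Delta> / 2)) (sqrt (\<sigma>\<^sup>2 * \<Delta>)))"

definition vDelta :: "real \<Rightarrow> real \<Rightarrow> real" where
  "vDelta v0 m = exp m * v0"

definition prob_below :: "real \<Rightarrow> real \<Rightarrow> real \<Rightarrow> real \<Rightarrow> real" where
  "prob_below v0 \<sigma> \<Delta> b = measure (logret_dist \<sigma> \<Delta>) {m. vDelta v0 m < b}"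

definition cond_exp_below :: "real \<Rightarrow> real \<Rightarrow> real \<Rightarrow> real \<Rightarrow> real" where
  "cond_exp_below v0 \<sigma> \<Delta> b =
     (\<integral>m. indicator {m. vDelta v0 m < b} m * vDelta v0 m \<partial>logret_dist \<sigma> \<Delta>) / prob_below v0 \<sigma> \<Delta> b"

definition zero_profit_lhs :: "real \<Rightarrow> real \<Rightarrow> real \<Rightarrow> real \<Rightarrow> real \<Rightarrow> real" where
  "zero_profit_lhs v0 \<sigma> \<Delta> p b =
     (1 - p) * (v0 - b) + p * prob_below v0 \<sigma> \<Delta> b * (cond_exp_below v0 \<sigma> \<Delta> b - b)"

text \<open>Expected payoff of a slow bidder who wins at time 0 with the highest slow bid b
  (before tie-splitting). With probability 1-p the fast bidder gets no opportunity and the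
  slow bidder receives the item (expected value v_Delta, whose mean is v0 given time-0
  information); with probability p the fast bidder outbids exactly when v_Delta > b
  (the slow bidder then gets 0), and otherwise the slow bidder gets v_Delta - b.\<close>
definition top_payoff :: "real \<Rightarrow> real \<Rightarrow> real \<Rightarrow> real \<Rightarrow> real \<Rightarrow> real" where
  "top_payoff v0 \<sigma> \<Delta> p b =
     (1 - p) * (\<integral>m. vDelta v0 m - b \<partial>logret_dist \<sigma> \<Delta>)
     + p * (\<integral>m. (if vDelta v0 m > b then 0 else vDelta v0 m - b) \<partial>logret_dist \<sigma> \<Delta>)"

definition slow_payoff ::
  "nat \<Rightarrow> real \<Rightarrow> real \<Rightarrow> real \<Rightarrow> real \<Rightarrow> (nat \<Rightarrow> real) \<Rightarrow> nat \<Rightarrow> real" where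
  "slow_payoff n v0 \<sigma> \<Delta> p \<beta> i =
     (let hi = Max (\<beta> ` {..<n}); W = {j. j < n \<and> \<beta> j = hi}
      in if \<beta> i = hi then top_payoff v0 \<sigma> \<Delta> p hi / real (card W) else 0)"

text \<open>Pure-strategy (Nash) equilibrium of the slow bidders' sealed-bid game, with the fast
  bidder playing its (optimal) strategy of outbidding the highest slow bid iff v_Delta > b.\<close>
definition slow_equilibrium ::
  "nat \<Rightarrow> real \<Rightarrow> real \<Rightarrow> real \<Rightarrow> real \<Rightarrow> (nat \<Rightarrow> real) \<Rightarrow> bool" where
  "slow_equilibrium n v0 \<sigma> \<Delta> p \<beta> \<longleftrightarrow>
     (\<forall>i<n. 0 \<le> \<beta> i) \<and>
     (\<forall>i<n. \<forall>b'\<ge>0. slow_payoff n v0 \<sigma> \<Delta> p (\<beta>(i := b')) i \<le> slow_payoff n v0 \<sigma> \<Delta> p \<beta> i)"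

definition slow_win_prob :: "real \<Rightarrow> real \<Rightarrow> real \<Rightarrow> real \<Rightarrow> real \<Rightarrow> real" where
  "slow_win_prob v0 \<sigma> \<Delta> p b =
     (1 - p) + p * measure (logret_dist \<sigma> \<Delta>) {m. vDelta v0 m \<le> b}"

end

theory Submission
  imports Defs
begin

(* Write v for v_Delta. Since E v = v0, a slow bidder who wins with bid b expects
     F b = (1 - p) (v0 - b) - p E[(b - v)^+]:
   when the fast bidder gets its chance, the slow winner keeps the item exactly when v <= b,
   i.e. it holds a short put with strike b. The same expression is the left-hand side of the
   zero-profit equation. F is continuous, F 0 >= 0 >= F v0, and F is strictly decreasing on
   [0, oo) because v falls below every positive level with positive probability; so F has a
   unique root b* in [0, v0]. Bertrand competition among at least two slow bidders pins the
   winning bid to that root: everybody bidding b* is an equilibrium; if the top bid b had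
   F b > 0, some slow bidder would earn at most F b / 2 and could win alone by overbidding
   slightly, and if F b < 0 a winner would rather bid 0. *)

definition put_value :: "'a measure \<Rightarrow> ('a \<Rightarrow> real) \<Rightarrow> real \<Rightarrow> real" where
  "put_value M X b = (\<integral>x. max 0 (b - X x) \<partial>M)"

context prob_space
begin

context
  fixes X :: "'a \<Rightarrow> real"
  assumes integrable_X: "integrable M X"
begin

lemma integrable_put_payoff: "integrable M (\<lambda>x. max 0 (b - X x))"
  using integrable_X by (intro Bochner_Integration.integrable_max integrable_diff) auto

lemma integrable_indicator_below: "integrable M (indicator {x \<in> space M. X x < c} :: 'a \<Rightarrow> real)"
  using integrable_X by (intro integrable_real_indicator) (auto simp: less_top[symmetric])

lemma put_value_diff:
  "put_value M X b' - put_value M X b = (\<integral>x. max 0 (b' - X x) - max 0 (b - X x) \<partial>M)"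
  unfolding put_value_def by (simp add: integrable_put_payoff)

lemma put_value_mono: "b \<le> b' \<Longrightarrow> put_value M X b \<le> put_value M X b'"
  unfolding put_value_def by (intro integral_mono integrable_put_payoff) auto

lemma put_value_diff_le:
  assumes "b \<le> b'"
  shows "put_value M X b' - put_value M X b \<le> b' - b"
proof -
  have "put_value M X b' - put_value M X b \<le> (\<integral>x. b' - b \<partial>M)"
    unfolding put_value_diff using assms
    by (intro integral_mono) (auto simp: integrable_put_payoff)
  then show ?thesis by (simp add: prob_space)
qed

lemma put_value_strict_mono:
  assumes "b \<le> c" "c < b'" "0 < prob {x \<in> space M. X x < c}"
  shows "put_value M X b < put_value M X b'"
proof -
  have [measurable]: "X \<in> borel_measurable M" using integrable_X by simp
  have "0 < (b' - c) * prob {x \<in> space M. X x < c}" using assms by simp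
  also have "\<dots> = (\<integral>x. (b' - c) * indicator {x \<in> space M. X x < c} x \<partial>M)" by simp
  also have "\<dots> \<le> put_value M X b' - put_value M X b"
    unfolding put_value_diff using assms
    by (intro integral_mono integrable_mult_right integrable_indicator_below)
      (auto simp: integrable_put_payoff indicator_def)
  finally show ?thesis by simp
qed

lemma continuous_on_put_value: "continuous_on A (put_value M X)"
proof (rule lipschitz_on_continuous_on[where L=1], rule lipschitz_onI)
  fix b b' show "dist (put_value M X b) (put_value M X b') \<le> 1 * dist b b'"
    using put_value_mono put_value_diff_le
    by (cases "b \<le> b'") (fastforce simp: dist_real_def)+
qed simp

text \<open>The quotient is the conditional mean as cond_exp_below defines it; the identity
  also holds when \<open>prob A = 0\<close>, where the quotient is the junk value \<open>x / 0 = 0\<close>.\<close>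
lemma prob_times_cond_mean_below:
  fixes b :: real
  defines "A \<equiv> {x \<in> space M. X x < b}"
  shows "prob A * ((\<integral>x. indicator A x * X x \<partial>M) / prob A - b) = - put_value M X b"
proof -
  have [measurable]: "X \<in> borel_measurable M" using integrable_X by simp
  have int: "integrable M (\<lambda>x. indicator A x * X x)"
    using integrable_real_mult_indicator[of A M X] integrable_X by (simp add: A_def mult.commute)
  have "- put_value M X b = (\<integral>x. indicator A x * X x - b * indicator A x \<partial>M)"
    unfolding put_value_def integral_minus[symmetric]
    by (rule Bochner_Integration.integral_cong) (auto simp: A_def indicator_def)
  also have "\<dots> = (\<integral>x. indicator A x * X x \<partial>M) - b * prob A"
    using int integrable_indicator_below by (simp add: A_def)
  finally have put: "- put_value M X b = (\<integral>x. indicator A x * X x \<partial>M) - b * prob A" .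
  show ?thesis
  proof (cases "prob A = 0")
    case True
    then have "A \<in> null_sets M" by (auto simp: A_def emeasure_eq_measure)
    then have "(\<integral>x. indicator A x * X x \<partial>M) = 0"
      by (subst integral_cong_AE[where g="\<lambda>_. 0"]) (auto dest: AE_not_in)
    then show ?thesis using True put by simp
  qed (simp add: put field_simps)
qed

end

end

lemma continuous_on_atLeast_gt_right:
  fixes f :: "real \<Rightarrow> real"
  assumes "continuous_on {a..} f" "a \<le> x" "y < f x"
  obtains x' where "x < x'" "y < f x'"
proof -
  obtain d where "0 < d" and d: "\<forall>x'\<in>{a..}. dist x' x < d \<longrightarrow> dist (f x') (f x) < f x - y"
    using assms unfolding continuous_on_iff by (metis atLeast_iff diff_gt_0_iff_gt)
  then have "dist (f (x + d / 2)) (f x) < f x - y"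
    using assms(2) by (simp add: dist_real_def)
  then show ?thesis
    using that[of "x + d / 2"] \<open>0 < d\<close> by (simp add: dist_real_def)
qed

text \<open>Bidders are \<open>0..<n\<close>; \<open>F b\<close> is the winner's expected payoff when the highest bid is \<open>b\<close>.\<close>
definition highest_bid_payoff :: "nat \<Rightarrow> (real \<Rightarrow> real) \<Rightarrow> (nat \<Rightarrow> real) \<Rightarrow> nat \<Rightarrow> real" where
  "highest_bid_payoff n F \<beta> i =
     (let hi = Max (\<beta> ` {..<n}); W = {j. j < n \<and> \<beta> j = hi}
      in if \<beta> i = hi then F hi / real (card W) else 0)"

definition bid_equilibrium :: "nat \<Rightarrow> (real \<Rightarrow> real) \<Rightarrow> (nat \<Rightarrow> real) \<Rightarrow> bool" where
  "bid_equilibrium n F \<beta> \<longleftrightarrow> (\<forall>i<n. 0 \<le> \<beta> i) \<and>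
     (\<forall>i<n. \<forall>b'\<ge>0. highest_bid_payoff n F (\<beta>(i := b')) i \<le> highest_bid_payoff n F \<beta> i)"

lemma other_bidder_exists: "2 \<le> n \<Longrightarrow> i < n \<Longrightarrow> \<exists>j<n. j \<noteq> (i::nat)"
  by (rule exI[of _ "if i = 0 then 1 else 0"]) auto

lemma highest_bid_payoff_nonneg: "0 \<le> F (\<beta> i) \<Longrightarrow> 0 \<le> highest_bid_payoff n F \<beta> i"
  by (auto simp: highest_bid_payoff_def Let_def)

lemma highest_bid_payoff_sole_top:
  assumes "i < n" "\<forall>j<n. j \<noteq> i \<longrightarrow> \<beta> j < \<beta> i"
  shows "highest_bid_payoff n F \<beta> i = F (\<beta> i)"
proof -
  have "Max (\<beta> ` {..<n}) = \<beta> i"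
    using assms by (intro Max_eqI) force+
  moreover have "{j. j < n \<and> \<beta> j = \<beta> i} = {i}"
    using assms by force
  ultimately show ?thesis
    by (simp add: highest_bid_payoff_def)
qed

lemma highest_bid_payoff_le_half:
  assumes "2 \<le> n" "0 \<le> F (Max (\<beta> ` {..<n}))"
  obtains l where "l < n" "highest_bid_payoff n F \<beta> l \<le> F (Max (\<beta> ` {..<n})) / 2"
proof -
  define b where "b = Max (\<beta> ` {..<n})"
  define W where "W = {j. j < n \<and> \<beta> j = b}"
  have "b \<in> \<beta> ` {..<n}"
    using assms(1) unfolding b_def by (intro Max_in) (auto simp: lessThan_empty_iff)
  then obtain i where i: "i < n" "\<beta> i = b"
    by auto
  then have "i \<in> W" "finite W"
    by (auto simp: W_def)
  then have "1 \<le> card W"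
    by (auto simp: Suc_le_eq card_gt_0_iff)
  have payoff: "highest_bid_payoff n F \<beta> j = (if \<beta> j = b then F b / card W else 0)" for j
    by (simp add: highest_bid_payoff_def b_def W_def)
  show ?thesis
  proof (cases "2 \<le> card W")
    case True
    then have "F b / card W \<le> F b / 2"
      using assms(2) by (intro divide_left_mono) (auto simp: b_def)
    then show ?thesis
      using that[of i] i payoff by (simp add: b_def)
  next
    case False
    with \<open>1 \<le> card W\<close> have "card W = 1"
      by simp
    then obtain w where "W = {w}"
      by (rule card_1_singletonE)
    with \<open>i \<in> W\<close> have "W = {i}"
      by simp
    obtain j where "j < n" "j \<noteq> i"
      using other_bidder_exists[OF assms(1) i(1)] by blast
    with \<open>W = {i}\<close> have "highest_bid_payoff n F \<beta> j = 0"
      by (auto simp: payoff W_def)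
    then show ?thesis
      using that[of j] \<open>j < n\<close> assms(2) by simp
  qed
qed

lemma bid_equilibrium_const:
  assumes "2 \<le> n" "0 \<le> r" "F r = 0" "\<forall>x\<ge>r. F x \<le> 0"
  shows "bid_equilibrium n F (\<lambda>_. r)"
  unfolding bid_equilibrium_def
proof (intro conjI allI impI)
  fix i and b' :: real assume "i < n" "0 \<le> b'"
  define \<beta> where "\<beta> = (\<lambda>_. r)(i := b')"
  obtain j where "j < n" "j \<noteq> i"
    using other_bidder_exists[OF assms(1) \<open>i < n\<close>] by blast
  then have "r \<le> Max (\<beta> ` {..<n})"
    by (intro Max_ge_iff[THEN iffD2]) (auto simp: \<beta>_def)
  then have "highest_bid_payoff n F \<beta> i \<le> 0"
    using assms(4) by (auto simp: highest_bid_payoff_def Let_def divide_nonpos_nonneg)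
  moreover have "highest_bid_payoff n F (\<lambda>_. r) i = 0"
    using assms(3) by (auto simp: highest_bid_payoff_def Let_def)
  ultimately show "highest_bid_payoff n F ((\<lambda>_. r)(i := b')) i \<le> highest_bid_payoff n F (\<lambda>_. r) i"
    by (simp add: \<beta>_def)
qed (use assms(2) in simp)

lemma bid_equilibrium_imp_root:
  assumes "2 \<le> n" "0 \<le> F 0" "continuous_on {0..} F" "bid_equilibrium n F \<beta>"
  shows "0 \<le> Max (\<beta> ` {..<n}) \<and> F (Max (\<beta> ` {..<n})) = 0"
proof -
  define b where "b = Max (\<beta> ` {..<n})"
  have nonneg: "\<forall>i<n. 0 \<le> \<beta> i"
    and stable: "\<forall>i<n. \<forall>b'\<ge>0. highest_bid_payoff n F (\<beta>(i := b')) i \<le> highest_bid_payoff n F \<beta> i"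
    using assms(4) by (auto simp: bid_equilibrium_def)
  have bids_le: "\<beta> j \<le> b" if "j < n" for j
    using that by (simp add: b_def)
  have "b \<in> \<beta> ` {..<n}"
    using assms(1) unfolding b_def by (intro Max_in) (auto simp: lessThan_empty_iff)
  then obtain i where i: "i < n" "\<beta> i = b"
    by auto
  have "0 \<le> b"
    using nonneg i by auto
  have "0 \<le> F b"
  proof -
    have "0 \<le> highest_bid_payoff n F (\<beta>(i := 0)) i"
      using assms(2) by (intro highest_bid_payoff_nonneg) simp
    also have "\<dots> \<le> highest_bid_payoff n F \<beta> i"
      using stable i(1) by simp
    also have "\<dots> = F b / card {j. j < n \<and> \<beta> j = b}"
      using i(2) by (simp add: highest_bid_payoff_def b_def)
    finally show ?thesis
      using i by (auto simp: zero_le_divide_iff)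
  qed
  moreover have "\<not> 0 < F b"
  proof
    assume "0 < F b"
    then obtain b1 where "b < b1" "F b / 2 < F b1"
      using continuous_on_atLeast_gt_right[OF assms(3) \<open>0 \<le> b\<close>, of "F b / 2"] by auto
    obtain l where "l < n" "highest_bid_payoff n F \<beta> l \<le> F b / 2"
      using highest_bid_payoff_le_half[OF assms(1)] \<open>0 \<le> F b\<close> unfolding b_def by blast
    have "F b1 = highest_bid_payoff n F (\<beta>(l := b1)) l"
      using \<open>l < n\<close> \<open>b < b1\<close> bids_le
      by (subst highest_bid_payoff_sole_top) (auto intro: le_less_trans)
    also have "\<dots> \<le> highest_bid_payoff n F \<beta> l"
      using stable \<open>l < n\<close> \<open>0 \<le> b\<close> \<open>b < b1\<close> by simp
    finally show False
      using \<open>highest_bid_payoff n F \<beta> l \<le> F b / 2\<close> \<open>F b / 2 < F b1\<close> by simp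
  qed
  ultimately show ?thesis
    using \<open>0 \<le> b\<close> by (simp add: b_def)
qed

lemma normal_density_mult_exp:
  fixes S x :: real
  assumes "0 < S"
  shows "normal_density (- (S / 2)) (sqrt S) x * exp x = normal_density (S / 2) (sqrt S) x"
proof -
  have "- (x + S / 2)\<^sup>2 / (2 * (sqrt S)\<^sup>2) + x = - (x - S / 2)\<^sup>2 / (2 * (sqrt S)\<^sup>2)"
    using assms by (simp add: field_simps power2_eq_square)
  then show ?thesis
    unfolding normal_density_def by (simp add: mult.assoc exp_add[symmetric])
qed

lemma prob_space_logret_dist: "0 < \<sigma> \<Longrightarrow> 0 < \<Delta> \<Longrightarrow> prob_space (logret_dist \<sigma> \<Delta>)"
  unfolding logret_dist_def by (rule prob_space_normal_density) simp

lemma sets_logret_dist [measurable_cong, simp]: "sets (logret_dist \<sigma> \<Delta>) = sets borel"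
  unfolding logret_dist_def by simp

lemma space_logret_dist [simp]: "space (logret_dist \<sigma> \<Delta>) = UNIV"
  unfolding logret_dist_def by simp

lemma borel_measurable_vDelta [measurable]: "vDelta v0 \<in> borel_measurable borel"
  unfolding vDelta_def by simp

lemma
  assumes "0 < \<sigma>" "0 < \<Delta>"
  shows integrable_vDelta: "integrable (logret_dist \<sigma> \<Delta>) (vDelta v0)"
    and integral_vDelta: "(\<integral>m. vDelta v0 m \<partial>logret_dist \<sigma> \<Delta>) = v0"
proof -
  define S where "S = \<sigma>\<^sup>2 * \<Delta>"
  have S: "0 < S" using assms by (simp add: S_def)
  have M: "logret_dist \<sigma> \<Delta> = density lborel (normal_density (- (S / 2)) (sqrt S))"
    unfolding logret_dist_def S_def by simp
  have shift: "normal_density (- (S / 2)) (sqrt S) m * vDelta v0 m = v0 * normal_density (S / 2) (sqrt S) m"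
    for m
    using normal_density_mult_exp[OF S, of m] by (simp add: vDelta_def ac_simps)
  show "integrable (logret_dist \<sigma> \<Delta>) (vDelta v0)"
    unfolding M using integrable_normal_density[of "S / 2" "sqrt S"] S
    by (subst integrable_density) (auto simp: shift)
  show "(\<integral>m. vDelta v0 m \<partial>logret_dist \<sigma> \<Delta>) = v0"
    unfolding M using integral_normal_density[of "S / 2" "sqrt S"] S
    by (subst integral_density) (auto simp: shift)
qed

lemma null_sets_logret_dist:
  assumes "0 < \<sigma>" "0 < \<Delta>"
  shows "null_sets (logret_dist \<sigma> \<Delta>) = null_sets lborel"
proof (intro set_eqI)
  fix A
  have "normal_density (- (\<sigma>\<^sup>2 * \<Delta> / 2)) (sqrt (\<sigma>\<^sup>2 * \<Delta>)) x \<noteq> 0" for x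
    using assms normal_density_pos[of "sqrt (\<sigma>\<^sup>2 * \<Delta>)"] by (metis less_irrefl real_sqrt_gt_zero
      mult_pos_pos zero_less_power)
  then have "A \<in> null_sets (logret_dist \<sigma> \<Delta>) \<longleftrightarrow> A \<in> sets borel \<and> (AE x in lborel. x \<notin> A)"
    unfolding logret_dist_def by (subst null_sets_density_iff) simp_all
  then show "A \<in> null_sets (logret_dist \<sigma> \<Delta>) \<longleftrightarrow> A \<in> null_sets lborel"
    by (metis AE_iff_null_sets null_setsD2 sets_lborel)
qed

lemma measure_vDelta_eq:
  assumes "0 < v0" "0 < \<sigma>" "0 < \<Delta>"
  shows "measure (logret_dist \<sigma> \<Delta>) {m. vDelta v0 m = b} = 0"
proof -
  have sub: "{m. vDelta v0 m = b} \<subseteq> {ln (b / v0)}"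
    using assms by (auto simp: vDelta_def)
  have "{ln (b / v0)} \<in> null_sets lborel"
    by (intro countable_imp_null_set_lborel) simp
  then have "{m. vDelta v0 m = b} \<in> null_sets lborel"
    by (rule null_sets_subset[OF _ _ sub]) simp
  then show ?thesis
    using assms by (intro measure_eq_0_null_sets) (simp add: null_sets_logret_dist)
qed

lemma measure_vDelta_less_pos:
  assumes "0 < v0" "0 < c" "0 < \<sigma>" "0 < \<Delta>"
  shows "0 < measure (logret_dist \<sigma> \<Delta>) {m. vDelta v0 m < c}"
proof -
  interpret prob_space "logret_dist \<sigma> \<Delta>" by (rule prob_space_logret_dist) (use assms in auto)
  define L where "L = ln (c / v0)"
  have "vDelta v0 m < c \<longleftrightarrow> m < L" for m
    using assms exp_less_cancel_iff[of m L] by (simp add: L_def vDelta_def pos_less_divide_eq)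
  then have "{L - 1<..<L} \<subseteq> {m. vDelta v0 m < c}"
    by (simp add: subset_eq)
  moreover have "{L - 1<..<L} \<notin> null_sets lborel"
    by (simp add: null_sets_def)
  ultimately have "{m. vDelta v0 m < c} \<notin> null_sets lborel"
    using null_sets_subset[of "{m. vDelta v0 m < c}" lborel "{L - 1<..<L}"] by fastforce
  then have "{m. vDelta v0 m < c} \<notin> null_sets (logret_dist \<sigma> \<Delta>)"
    using null_sets_logret_dist[OF assms(3,4)] by simp
  then show ?thesis
    by (simp add: zero_less_measure_iff emeasure_eq_measure null_sets_def)
qed

lemma slow_equilibrium_iff:
  "slow_equilibrium n v0 \<sigma> \<Delta> p = bid_equilibrium n (top_payoff v0 \<sigma> \<Delta> p)"
  by (simp add: fun_eq_iff slow_equilibrium_def bid_equilibrium_def slow_payoff_def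
      highest_bid_payoff_def)

context
  fixes v0 \<sigma> \<Delta> :: real
  assumes \<sigma>_pos: "0 < \<sigma>" and \<Delta>_pos: "0 < \<Delta>"
begin

interpretation logret: prob_space "logret_dist \<sigma> \<Delta>"
  using prob_space_logret_dist[OF \<sigma>_pos \<Delta>_pos] .

lemma measure_logret_dist_UNIV: "measure (logret_dist \<sigma> \<Delta>) UNIV = 1"
  using logret.prob_space by simp

lemma top_payoff_eq_put_value:
  "top_payoff v0 \<sigma> \<Delta> p b = (1 - p) * (v0 - b) - p * put_value (logret_dist \<sigma> \<Delta>) (vDelta v0) b"
proof -
  have "(\<integral>m. vDelta v0 m - b \<partial>logret_dist \<sigma> \<Delta>) = v0 - b"
    using integrable_vDelta[OF \<sigma>_pos \<Delta>_pos] integral_vDelta[OF \<sigma>_pos \<Delta>_pos]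
    by (simp add: measure_logret_dist_UNIV)
  moreover have "(\<integral>m. (if vDelta v0 m > b then 0 else vDelta v0 m - b) \<partial>logret_dist \<sigma> \<Delta>)
      = - put_value (logret_dist \<sigma> \<Delta>) (vDelta v0) b"
    unfolding put_value_def integral_minus[symmetric]
    by (rule Bochner_Integration.integral_cong) auto
  ultimately show ?thesis
    by (simp add: top_payoff_def)
qed

lemma zero_profit_lhs_eq_top_payoff: "zero_profit_lhs v0 \<sigma> \<Delta> p b = top_payoff v0 \<sigma> \<Delta> p b"
  using logret.prob_times_cond_mean_below[OF integrable_vDelta[OF \<sigma>_pos \<Delta>_pos, of v0], of b]
  by (simp add: zero_profit_lhs_def cond_exp_below_def prob_below_def top_payoff_eq_put_value
      mult.assoc)

lemma slow_win_prob_eq: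
  assumes "0 < v0"
  shows "slow_win_prob v0 \<sigma> \<Delta> p b = p * prob_below v0 \<sigma> \<Delta> b + (1 - p)"
proof -
  have "{m. vDelta v0 m \<le> b} = {m. vDelta v0 m < b} \<union> {m. vDelta v0 m = b}"
    by auto
  then have "measure (logret_dist \<sigma> \<Delta>) {m. vDelta v0 m \<le> b}
      = prob_below v0 \<sigma> \<Delta> b + measure (logret_dist \<sigma> \<Delta>) {m. vDelta v0 m = b}"
    unfolding prob_below_def by (simp, subst logret.finite_measure_Union) auto
  then show ?thesis
    using measure_vDelta_eq[OF assms \<sigma>_pos \<Delta>_pos] by (simp add: slow_win_prob_def)
qed

lemma continuous_on_top_payoff: "continuous_on A (top_payoff v0 \<sigma> \<Delta> p)"
proof -
  have "continuous_on A (\<lambda>b. (1 - p) * (v0 - b) - p * put_value (logret_dist \<sigma> \<Delta>) (vDelta v0) b)"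
    using logret.continuous_on_put_value[OF integrable_vDelta[OF \<sigma>_pos \<Delta>_pos]]
    by (intro continuous_intros)
  then show ?thesis
    by (simp add: top_payoff_eq_put_value[abs_def])
qed

context
  fixes p :: real
  assumes v0_pos: "0 < v0" and p_nonneg: "0 \<le> p" and p_le_1: "p \<le> 1"
begin

text \<open>Strictness comes from the fast bidder when \<open>p > 0\<close> (the value falls below any positive
  level with positive probability) and from the certain sale when \<open>p < 1\<close>.\<close>
lemma top_payoff_strict_antimono:
  assumes "0 \<le> b" "b < b'"
  shows "top_payoff v0 \<sigma> \<Delta> p b' < top_payoff v0 \<sigma> \<Delta> p b"
proof -
  let ?put = "put_value (logret_dist \<sigma> \<Delta>) (vDelta v0)"
  have "?put b < ?put b'"
    using assms measure_vDelta_less_pos[OF v0_pos _ \<sigma>_pos \<Delta>_pos, of "(b + b') / 2"]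
    by (intro logret.put_value_strict_mono[OF integrable_vDelta[OF \<sigma>_pos \<Delta>_pos], of _ "(b + b') / 2"])
      simp_all
  then have "0 < (1 - p) * (b' - b) + p * (?put b' - ?put b)"
    using assms p_nonneg p_le_1
    by (cases "p = 0") (auto intro: add_nonneg_pos)
  then show ?thesis
    by (simp add: top_payoff_eq_put_value algebra_simps)
qed

lemma top_payoff_at_0_nonneg: "0 \<le> top_payoff v0 \<sigma> \<Delta> p 0"
proof -
  have "put_value (logret_dist \<sigma> \<Delta>) (vDelta v0) 0 = 0"
    using v0_pos by (simp add: put_value_def vDelta_def)
  then show ?thesis
    using v0_pos p_le_1 by (simp add: top_payoff_eq_put_value)
qed

lemma top_payoff_at_v0_nonpos: "top_payoff v0 \<sigma> \<Delta> p v0 \<le> 0"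
proof -
  have "0 \<le> put_value (logret_dist \<sigma> \<Delta>) (vDelta v0) v0"
    unfolding put_value_def by simp
  then show ?thesis
    using p_nonneg by (simp add: top_payoff_eq_put_value)
qed

lemma top_payoff_unique_root:
  obtains r where "r \<in> {0..v0}" "top_payoff v0 \<sigma> \<Delta> p r = 0"
    and "\<And>b. 0 \<le> b \<Longrightarrow> top_payoff v0 \<sigma> \<Delta> p b = 0 \<Longrightarrow> b = r"
proof -
  obtain r where r: "0 \<le> r" "r \<le> v0" "top_payoff v0 \<sigma> \<Delta> p r = 0"
    using IVT2'[of "top_payoff v0 \<sigma> \<Delta> p" v0 0 0] top_payoff_at_v0_nonpos top_payoff_at_0_nonneg
      v0_pos continuous_on_top_payoff by auto
  show ?thesis
  proof (rule that)
    show "r \<in> {0..v0}" "top_payoff v0 \<sigma> \<Delta> p r = 0"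
      using r by simp_all
    show "b = r" if "0 \<le> b" "top_payoff v0 \<sigma> \<Delta> p b = 0" for b
      using top_payoff_strict_antimono[of b r] top_payoff_strict_antimono[of r b] that r
      by (cases b r rule: linorder_cases) auto
  qed
qed

end

end

theorem mainTheorem5:
  fixes n :: nat and v0 \<sigma> \<Delta> p :: real
  assumes "2 \<le> n" and "0 < v0" and "0 < \<sigma>" and "0 < \<Delta>" and "0 \<le> p" and "p \<le> 1"
  shows "(\<exists>\<beta>. slow_equilibrium n v0 \<sigma> \<Delta> p \<beta>) \<and>
    (\<forall>\<beta>. slow_equilibrium n v0 \<sigma> \<Delta> p \<beta> \<longrightarrow>
       (let b = Max (\<beta> ` {..<n}) in
          b \<in> {0..v0} \<and> zero_profit_lhs v0 \<sigma> \<Delta> p b = 0 \<and>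
          (\<forall>b'\<in>{0..v0}. zero_profit_lhs v0 \<sigma> \<Delta> p b' = 0 \<longrightarrow> b' \<le> b) \<and>
          slow_win_prob v0 \<sigma> \<Delta> p b = p * prob_below v0 \<sigma> \<Delta> b + (1 - p)))"
proof -
  note \<sigma>\<Delta> = assms(3,4) and v0_p = assms(2,5,6)
  let ?F = "top_payoff v0 \<sigma> \<Delta> p"
  obtain r where r: "r \<in> {0..v0}" "?F r = 0"
    and unique: "\<And>b. 0 \<le> b \<Longrightarrow> ?F b = 0 \<Longrightarrow> b = r"
    using top_payoff_unique_root[OF \<sigma>\<Delta> v0_p] by blast
  have "?F x \<le> 0" if "r \<le> x" for x
    using top_payoff_strict_antimono[OF \<sigma>\<Delta> v0_p, of r x] that r by (cases "x = r") auto
  then have "slow_equilibrium n v0 \<sigma> \<Delta> p (\<lambda>_. r)"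
    unfolding slow_equilibrium_iff using assms(1) r by (intro bid_equilibrium_const) auto
  moreover have "Max (\<beta> ` {..<n}) = r" if "slow_equilibrium n v0 \<sigma> \<Delta> p \<beta>" for \<beta>
    using bid_equilibrium_imp_root[OF assms(1) top_payoff_at_0_nonneg[OF \<sigma>\<Delta> v0_p]
        continuous_on_top_payoff[OF \<sigma>\<Delta>]] that unique
    by (metis slow_equilibrium_iff)
  moreover have "r \<in> {0..v0} \<and> zero_profit_lhs v0 \<sigma> \<Delta> p r = 0 \<and>
      (\<forall>b'\<in>{0..v0}. zero_profit_lhs v0 \<sigma> \<Delta> p b' = 0 \<longrightarrow> b' \<le> r) \<and>
      slow_win_prob v0 \<sigma> \<Delta> p r = p * prob_below v0 \<sigma> \<Delta> r + (1 - p)"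
    using r unique[THEN eq_refl]
    by (simp add: zero_profit_lhs_eq_top_payoff[OF \<sigma>\<Delta>] slow_win_prob_eq[OF \<sigma>\<Delta> assms(2)])
  ultimately show ?thesis
    by (auto simp: Let_def)
qed

end
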